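(* Let $P$ be an abelian group, $s\in\mathbb R_{>0}$, and $h\colon P\to\mathbb R$ such that for all $L_0,\dots,L_r\in P$, as $|m|\to\infty$ with $m\in\mathbb Z^r$, $h(\sum_im_iL_i)=O(|m|^s)$ and $h(L_0+\sum_im_iL_i)-h(\sum_im_iL_i)=O(|m|^{s-1})$. Let $\hat h\colon P_{\mathbb R}\to\mathbb R$ be the unique function with $\hat h(L)=\limsup_{m\to\infty}m^{-s}h(mL)$ for $L\in P$, homogeneous of degree $s$ under $\mathbb R_{\ge0}$, and continuous on finite-dimensional subspaces. Fix $L_1,\dots,L_r\in P$, write $\hat h(x)=\hat h(\sum_ix_iL_i)$ and $f_m(x)=m^{-s}h(\sum_i\lfloor mx_i\rfloor L_i)$ for $x\in\mathbb R^r$, $m\in\mathbb N_{>0}$. Then: (i) for all $x\in\mathbb R^r$, $\hat h(x)=\limsup_{m\to\infty}f_m(x)$; (ii) if $\sigma\subset\mathbb R^r$ is an open convex cone such that $\lim_{m\to\infty}f_m(x)=\hat h(x)$ for all $x\in\sigma\cap\mathbb Z^r$, then $\lim_{m\to\infty}f_m(x)=\hat h(x)$ for all $x\in\overline\sigma$.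
   Context: $P_{\mathbb R}=P\otimes_{\mathbb Z}\mathbb R$, the image of $L\in P$ is still written $L$, and $|m|=\sum_i|m_i|$; the implied constants may depend on $L_0,\dots,L_r$. *)

theory Defs
  imports "HOL-Analysis.Analysis"
begin

definition zsmult :: "int \<Rightarrow> 'a::ab_group_add \<Rightarrow> 'a" where
  "zsmult k a = (if 0 \<le> k then (\<Sum>j<nat k. a) else - (\<Sum>j<nat (- k). a))"

definition zlincomb :: "nat \<Rightarrow> (nat \<Rightarrow> int) \<Rightarrow> (nat \<Rightarrow> 'a::ab_group_add) \<Rightarrow> 'a" where
  "zlincomb r m L = (\<Sum>i<r. zsmult (m i) (L i))"

definition znorm1 :: "nat \<Rightarrow> (nat \<Rightarrow> int) \<Rightarrow> real" where
  "znorm1 r m = (\<Sum>i<r. real_of_int \<bar>m i\<bar>)"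

definition open_convex_cone :: "'a::real_normed_vector set \<Rightarrow> bool" where
  "open_convex_cone S \<longleftrightarrow> open S \<and> convex S \<and> (\<forall>x\<in>S. \<forall>c>0. c *\<^sub>R x \<in> S)"

end

theory Submission
  imports Defs
begin

(* The heart of the argument is a discrete Lipschitz estimate. Walking from a lattice point a to
   a lattice point b by unit steps, the increment hypothesis gives
   |h(sum b_i L_i) - h(sum a_i L_i)| <= C |b - a| |a|^(s-1) as long as |b - a| <= |a|/2.
   After rescaling, f_m(y) - f_m(x) = O(|y - x| + 1/m) for y near a point x <> 0, uniformly in m.

   At a rational point x = k/q one has f_(qj)(x) = f_j(k) / q^s, and the identity
   f_m(x) = (m'/m)^s f_m'((m/m') x) together with the Lipschitz estimate shows that
   f_m(x) - f_(q floor(m/q))(x) -> 0. Hence limsup f_m(x) = hhat(k)/q^s = hhat(x), and f_m(x)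
   converges when f_m(k) does. Both statements extend to arbitrary x, resp. to the closure of the
   cone, by approximating x with rational points, using the continuity of hhat and the uniformity
   of the Lipschitz estimate. *)

section \<open>Integer multiples and lattice points\<close>

lemma sum_lessThan_const_add:
  "(\<Sum>j<p + q. a) = (\<Sum>j<p. a) + (\<Sum>j<(q::nat). (a::'a::ab_group_add))"
  by (induction q) (simp_all add: add.assoc)

lemma zsmult_of_nat_diff:
  "zsmult (int p - int q) a = (\<Sum>j<p. a) - (\<Sum>j<q. (a::'a::ab_group_add))"
proof (cases "q \<le> p")
  case True
  then have "(\<Sum>j<p. a) = (\<Sum>j<p - q. a) + (\<Sum>j<q. a)"
    using sum_lessThan_const_add[where p = "p - q" and q = q] by simp
  with True show ?thesis by (simp add: zsmult_def nat_diff_distrib)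
next
  case False
  then have "(\<Sum>j<q. a) = (\<Sum>j<q - p. a) + (\<Sum>j<p. a)"
    using sum_lessThan_const_add[where p = "q - p" and q = p] by simp
  with False show ?thesis by (simp add: zsmult_def nat_diff_distrib)
qed

lemma zsmult_eq_diff: "zsmult k a = (\<Sum>j<nat k. a) - (\<Sum>j<nat (- k). (a::'a::ab_group_add))"
  by (simp add: zsmult_def)

lemma zsmult_add: "zsmult (j + k) a = zsmult j a + zsmult k (a::'a::ab_group_add)"
proof -
  have "j + k = int (nat j + nat k) - int (nat (- j) + nat (- k))" by simp
  then have "zsmult (j + k) a = (\<Sum>i<nat j + nat k. a) - (\<Sum>i<nat (- j) + nat (- k). a)"
    by (metis zsmult_of_nat_diff)
  then show ?thesis by (simp add: sum_lessThan_const_add zsmult_eq_diff[of j] zsmult_eq_diff[of k])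
qed

lemma zsmult_0 [simp]: "zsmult 0 a = 0"
  by (simp add: zsmult_def)

lemma zsmult_1 [simp]: "zsmult 1 a = a"
  by (simp add: zsmult_def)

lemma zsmult_zero_right [simp]: "zsmult k (0::'a::ab_group_add) = 0"
  by (simp add: zsmult_def)

lemma zsmult_plus: "zsmult k (a + b) = zsmult k a + zsmult k (b::'a::ab_group_add)"
  by (simp add: zsmult_def sum.distrib)

lemma zsmult_sum:
  "finite A \<Longrightarrow> zsmult k (\<Sum>i\<in>A. g i) = (\<Sum>i\<in>A. zsmult k (g i::'a::ab_group_add))"
  by (induction A rule: finite_induct) (simp_all add: zsmult_plus)

lemma zsmult_of_nat_zsmult: "zsmult (int m) (zsmult k a) = zsmult (int m * k) (a::'a::ab_group_add)"
proof (induction m)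
  case (Suc m)
  have "zsmult (int (Suc m)) (zsmult k a) = zsmult (int m) (zsmult k a) + zsmult k a"
    using zsmult_add[of "int m" 1 "zsmult k a"] by (simp add: add.commute)
  also have "\<dots> = zsmult (int (Suc m) * k) a"
    by (simp add: Suc zsmult_add[symmetric] algebra_simps)
  finally show ?case .
qed simp

definition zcomb :: "('n::finite \<Rightarrow> 'p::ab_group_add) \<Rightarrow> ('n \<Rightarrow> int) \<Rightarrow> 'p" where
  "zcomb L a = (\<Sum>i\<in>UNIV. zsmult (a i) (L i))"

definition znorm :: "('n::finite \<Rightarrow> int) \<Rightarrow> real" where
  "znorm a = (\<Sum>i\<in>UNIV. real_of_int \<bar>a i\<bar>)"

lemma zcomb_add: "zcomb L (\<lambda>i. a i + b i) = zcomb L a + zcomb L b"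
  by (simp add: zcomb_def zsmult_add sum.distrib)

lemma zcomb_upd: "zcomb L (a(i := a i + d)) = zsmult d (L i) + zcomb L a"
proof -
  have "a(i := a i + d) = (\<lambda>j. (if j = i then d else 0) + a j)"
    by (auto simp: fun_eq_iff)
  moreover have "zcomb L (\<lambda>j. if j = i then d else 0) = (\<Sum>j\<in>UNIV. if j = i then zsmult d (L i) else 0)"
    unfolding zcomb_def by (rule sum.cong) auto
  then have "zcomb L (\<lambda>j. if j = i then d else 0) = zsmult d (L i)"
    by simp
  ultimately show ?thesis by (simp add: zcomb_add[of L "\<lambda>j. if j = i then d else 0" a])
qed

lemma zsmult_zcomb: "zsmult (int m) (zcomb L k) = zcomb L (\<lambda>i. int m * k i)"
  by (simp add: zcomb_def zsmult_sum zsmult_of_nat_zsmult)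

lemma zcomb_bound_of_zlincomb_bound:
  fixes L :: "'n::finite \<Rightarrow> 'p::ab_group_add"
  assumes "\<And>r (Ls :: nat \<Rightarrow> 'p). \<exists>C R. \<forall>m. R \<le> znorm1 r m \<longrightarrow> P C (znorm1 r m) (zlincomb r m Ls)"
  shows "\<exists>C R. \<forall>a. R \<le> znorm a \<longrightarrow> P C (znorm a) (zcomb L a)"
proof -
  obtain e :: "nat \<Rightarrow> 'n" where e: "bij_betw e {..<CARD('n)} UNIV"
    using ex_bij_betw_nat_finite[of "UNIV :: 'n set"] by (auto simp: atLeast0LessThan)
  have "zlincomb CARD('n) (a \<circ> e) (L \<circ> e) = zcomb L a" "znorm1 CARD('n) (a \<circ> e) = znorm a" for a
    using sum.reindex_bij_betw[OF e, of "\<lambda>i. zsmult (a i) (L i)"] sum.reindex_bij_betw[OF e, of "\<lambda>i. real_of_int \<bar>a i\<bar>"]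
    by (simp_all add: zlincomb_def zcomb_def znorm1_def znorm_def)
  moreover obtain C R where "\<forall>m. R \<le> znorm1 CARD('n) m \<longrightarrow> P C (znorm1 CARD('n) m) (zlincomb CARD('n) m (L \<circ> e))"
    using assms by blast
  ultimately have "\<forall>a. R \<le> znorm a \<longrightarrow> P C (znorm a) (zcomb L a)"
    by (metis (no_types, lifting))
  then show ?thesis by blast
qed

lemma znorm_nonneg: "0 \<le> znorm a"
  by (simp add: znorm_def sum_nonneg)

lemma znorm_eq_0_iff: "znorm a = 0 \<longleftrightarrow> a = (\<lambda>_. 0)"
  by (simp add: znorm_def sum_nonneg_eq_0_iff fun_eq_iff)

lemma znorm_of_nat: obtains k :: nat where "znorm a = real k"
proof
  show "znorm a = real (nat (\<Sum>i\<in>UNIV. \<bar>a i\<bar>))"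
    by (simp add: znorm_def sum_nonneg)
qed

lemma znorm_diff_bound: "\<bar>znorm b - znorm a\<bar> \<le> znorm (\<lambda>j. b j - a j)"
proof -
  have "\<bar>znorm b - znorm a\<bar> = \<bar>\<Sum>i\<in>UNIV. real_of_int (\<bar>b i\<bar> - \<bar>a i\<bar>)\<bar>"
    by (simp add: znorm_def sum_subtractf)
  also have "\<dots> \<le> (\<Sum>i\<in>UNIV. \<bar>real_of_int (\<bar>b i\<bar> - \<bar>a i\<bar>)\<bar>)"
    by (rule sum_abs)
  also have "\<dots> \<le> znorm (\<lambda>j. b j - a j)"
    unfolding znorm_def by (intro sum_mono) auto
  finally show ?thesis .
qed

lemma znorm_upd: "znorm (a(i := v)) = znorm a - \<bar>a i\<bar> + \<bar>v\<bar>"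
proof -
  have split: "(\<Sum>j\<in>UNIV. g j) = g i + (\<Sum>j\<in>UNIV - {i}. g j)" for g :: "'a \<Rightarrow> real"
    by (rule sum.remove) auto
  have "(\<Sum>j\<in>UNIV - {i}. real_of_int \<bar>(a(i := v)) j\<bar>) = (\<Sum>j\<in>UNIV - {i}. real_of_int \<bar>a j\<bar>)"
    by (rule sum.cong) auto
  then show ?thesis
    unfolding znorm_def split[of "\<lambda>j. real_of_int \<bar>(a(i := v)) j\<bar>"] split[of "\<lambda>j. real_of_int \<bar>a j\<bar>"]
    by simp
qed

lemma unit_step_towards:
  assumes "b \<noteq> (a :: 'n::finite \<Rightarrow> int)"
  obtains i d where "\<bar>d\<bar> = 1" "znorm (\<lambda>j. (b(i := b i + d)) j - a j) = znorm (\<lambda>j. b j - a j) - 1"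
proof -
  obtain i where i: "b i \<noteq> a i" using assms by auto
  define d where "d = sgn (a i - b i)"
  have "\<bar>b i + d - a i\<bar> = \<bar>b i - a i\<bar> - 1"
    using i by (auto simp: d_def sgn_if)
  moreover have "(\<lambda>j. (b(i := b i + d)) j - a j) = (\<lambda>j. b j - a j)(i := b i + d - a i)"
    by auto
  ultimately have "znorm (\<lambda>j. (b(i := b i + d)) j - a j) = znorm (\<lambda>j. b j - a j) - 1"
    using znorm_upd[of "\<lambda>j. b j - a j" i "b i + d - a i"] by simp
  moreover have "\<bar>d\<bar> = 1" using i by (simp add: d_def)
  ultimately show thesis using that by blast
qed

lemma lattice_path_bound:
  fixes g :: "('n::finite \<Rightarrow> int) \<Rightarrow> real"
  assumes step: "\<And>c i d. znorm (\<lambda>j. c j - a j) \<le> D \<Longrightarrow> \<bar>d\<bar> = 1 \<Longrightarrow>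
                   \<bar>g (c(i := c i + d)) - g c\<bar> \<le> B"
    and b: "znorm (\<lambda>j. b j - a j) \<le> D"
  shows "\<bar>g b - g a\<bar> \<le> B * znorm (\<lambda>j. b j - a j)"
proof -
  obtain k where "znorm (\<lambda>j. b j - a j) = real k" by (rule znorm_of_nat)
  with b show ?thesis
  proof (induction k arbitrary: b)
    case 0
    then have "b = a" by (simp add: znorm_eq_0_iff fun_eq_iff)
    then show ?case by (simp add: znorm_def)
  next
    case (Suc k)
    then have "b \<noteq> a" by (auto simp: znorm_def)
    then obtain i d where d: "\<bar>d\<bar> = 1"
      and closer: "znorm (\<lambda>j. (b(i := b i + d)) j - a j) = znorm (\<lambda>j. b j - a j) - 1"
      by (rule unit_step_towards)
    define b' where "b' = b(i := b i + d)"
    have b': "znorm (\<lambda>j. b' j - a j) = real k" "znorm (\<lambda>j. b' j - a j) \<le> D"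
      using closer Suc.prems by (simp_all add: b'_def)
    have "b = b'(i := b' i + - d)" by (simp add: b'_def)
    then have "\<bar>g b - g b'\<bar> \<le> B" using step[OF b'(2), of "- d" i] d by simp
    moreover have "\<bar>g b' - g a\<bar> \<le> B * real k" using Suc.IH[OF b'(2,1)] b'(1) by simp
    ultimately show ?case using Suc.prems(2) by (simp add: algebra_simps)
  qed
qed

section \<open>A discrete Lipschitz estimate\<close>

lemma finite_uniform_constants:
  fixes P :: "'i::finite \<Rightarrow> real \<Rightarrow> real \<Rightarrow> bool"
  assumes ex: "\<And>i. \<exists>C R. P i C R"
    and mono: "\<And>i C R C' R'. P i C R \<Longrightarrow> C \<le> C' \<Longrightarrow> R \<le> R' \<Longrightarrow> P i C' R'"
  obtains C R where "C \<ge> 0" "R > 0" "\<And>i. P i C R"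
proof -
  obtain C R where CR: "\<And>i. P i (C i) (R i)" using ex by metis
  define C0 where "C0 = max 0 (Max (range C))"
  define R0 where "R0 = max 1 (Max (range R))"
  have "C i \<le> C0" "R i \<le> R0" for i
    unfolding C0_def R0_def by (simp_all add: le_max_iff_disj)
  then have "P i C0 R0" for i
    by (rule mono[OF CR])
  moreover have "C0 \<ge> 0" "R0 > 0" by (simp_all add: C0_def R0_def)
  ultimately show thesis using that by blast
qed

lemma powr_le_of_comparable:
  fixes z A e :: real
  assumes "0 < A" "A / 2 \<le> z" "z \<le> 2 * A"
  shows "z powr e \<le> 2 powr \<bar>e\<bar> * A powr e"
proof (cases "e \<ge> 0")
  case True
  then have "z powr e \<le> (2 * A) powr e" using assms by (intro powr_mono2) auto
  then show ?thesis using True assms by (simp add: powr_mult)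
next
  case False
  then have "z powr e \<le> (A / 2) powr e" using assms by (intro powr_mono2') auto
  also have "\<dots> = A powr e / 2 powr e" using assms by (simp add: powr_divide)
  also have "\<dots> = 2 powr \<bar>e\<bar> * A powr e" using False by (simp add: abs_of_neg powr_minus_divide)
  finally show ?thesis .
qed

locale lattice_height =
  fixes h :: "'p::ab_group_add \<Rightarrow> real" and s :: real and L :: "'n::finite \<Rightarrow> 'p"
  assumes s_pos: "0 < s"
    and growth: "\<exists>C R. \<forall>a. R \<le> znorm a \<longrightarrow> \<bar>h (zcomb L a)\<bar> \<le> C * znorm a powr s"
    and increment: "\<And>p. \<exists>C R. \<forall>a. R \<le> znorm a \<longrightarrow>
                      \<bar>h (p + zcomb L a) - h (zcomb L a)\<bar> \<le> C * znorm a powr (s - 1)"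
begin

lemma unit_step_bound:
  obtains C R where "C \<ge> 0" "R > 0"
    "\<And>a i d. R \<le> znorm a \<Longrightarrow> \<bar>d\<bar> = 1 \<Longrightarrow>
       \<bar>h (zcomb L (a(i := a i + d))) - h (zcomb L a)\<bar> \<le> C * znorm a powr (s - 1)"
proof -
  \<comment> \<open>One pair of constants for each of the finitely many increments \<open>\<pm>L i\<close>.\<close>
  define incr where "incr iu a = \<bar>h (zsmult (if snd iu then 1 else - 1) (L (fst iu)) + zcomb L a) - h (zcomb L a)\<bar>"
    for iu :: "'n \<times> bool" and a :: "'n \<Rightarrow> int"
  define P where
    "P iu C R \<longleftrightarrow> (\<forall>a :: 'n \<Rightarrow> int. R \<le> znorm a \<longrightarrow> incr iu a \<le> C * znorm a powr (s - 1))"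
    for iu C R
  have "\<exists>C R. P iu C R" for iu
    using increment unfolding P_def incr_def by blast
  moreover have "P iu C' R'" if "P iu C R" "C \<le> C'" "R \<le> R'" for iu C R C' R'
    unfolding P_def
  proof (intro allI impI)
    fix a :: "'n \<Rightarrow> int" assume "R' \<le> znorm a"
    then have "incr iu a \<le> C * znorm a powr (s - 1)" using that(1,3) unfolding P_def by auto
    also have "\<dots> \<le> C' * znorm a powr (s - 1)" using that(2) by (rule mult_right_mono) simp
    finally show "incr iu a \<le> C' * znorm a powr (s - 1)" .
  qed
  ultimately obtain C R where C: "C \<ge> 0" and R: "R > 0" and CR: "\<And>iu. P iu C R"
    using finite_uniform_constants[of P] by blast
  have "\<bar>h (zcomb L (a(i := a i + d))) - h (zcomb L a)\<bar> \<le> C * znorm a powr (s - 1)"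
    if "R \<le> znorm a" "\<bar>d\<bar> = 1" for a i d
  proof -
    have "d = (if d = 1 then 1 else - 1)" using that(2) by auto
    then have "\<bar>h (zcomb L (a(i := a i + d))) - h (zcomb L a)\<bar> = incr (i, d = 1) a"
      unfolding incr_def zcomb_upd by simp
    then show ?thesis using CR[of "(i, d = 1)"] that(1) unfolding P_def by auto
  qed
  with C R show thesis by (rule that)
qed

lemma local_lipschitz:
  obtains C R where "C \<ge> 0" "R > 0"
    "\<And>a b. R \<le> znorm a \<Longrightarrow> 2 * znorm (\<lambda>j. b j - a j) \<le> znorm a \<Longrightarrow>
       \<bar>h (zcomb L b) - h (zcomb L a)\<bar> \<le> C * znorm (\<lambda>j. b j - a j) * znorm a powr (s - 1)"
proof -
  obtain C R where C: "C \<ge> 0" and R: "R > 0"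
    and step: "\<And>a i d. R \<le> znorm a \<Longrightarrow> \<bar>d\<bar> = 1 \<Longrightarrow>
       \<bar>h (zcomb L (a(i := a i + d))) - h (zcomb L a)\<bar> \<le> C * znorm a powr (s - 1)"
    using unit_step_bound by blast
  have main: "\<bar>h (zcomb L b) - h (zcomb L a)\<bar> \<le> (C * 2 powr \<bar>s - 1\<bar>) * znorm (\<lambda>j. b j - a j) * znorm a powr (s - 1)"
    if a: "2 * R \<le> znorm a" and ab: "2 * znorm (\<lambda>j. b j - a j) \<le> znorm a" for a b
  proof -
    \<comment> \<open>Every lattice point on a shortest path from a to b has norm between half and twice that of a.\<close>
    have cstep: "\<bar>h (zcomb L (c(i := c i + d))) - h (zcomb L c)\<bar> \<le> C * (2 powr \<bar>s - 1\<bar> * znorm a powr (s - 1))"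
      if c: "znorm (\<lambda>j. c j - a j) \<le> znorm (\<lambda>j. b j - a j)" and d: "\<bar>d\<bar> = 1" for c i d
    proof -
      have lo: "znorm a / 2 \<le> znorm c" and hi: "znorm c \<le> 2 * znorm a"
        using znorm_diff_bound[of c a] c ab znorm_nonneg[of a] by linarith+
      have "0 < znorm a" using a R by linarith
      then have "znorm c powr (s - 1) \<le> 2 powr \<bar>s - 1\<bar> * znorm a powr (s - 1)"
        using lo hi by (rule powr_le_of_comparable)
      then have "C * znorm c powr (s - 1) \<le> C * (2 powr \<bar>s - 1\<bar> * znorm a powr (s - 1))"
        using C by (rule mult_left_mono)
      moreover have "\<bar>h (zcomb L (c(i := c i + d))) - h (zcomb L c)\<bar> \<le> C * znorm c powr (s - 1)"
        using lo a d by (intro step) auto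
      ultimately show ?thesis by linarith
    qed
    have "\<bar>h (zcomb L b) - h (zcomb L a)\<bar>
        \<le> C * (2 powr \<bar>s - 1\<bar> * znorm a powr (s - 1)) * znorm (\<lambda>j. b j - a j)"
      by (rule lattice_path_bound[where g = "\<lambda>c. h (zcomb L c)" and D = "znorm (\<lambda>j. b j - a j)"])
        (auto intro: cstep)
    then show ?thesis by (simp add: algebra_simps)
  qed
  have "C * 2 powr \<bar>s - 1\<bar> \<ge> 0" "2 * R > 0" using C R by simp_all
  then show thesis using main by (rule that)
qed

end

section \<open>Floors of real vectors and the l1 norm\<close>

definition zfloor :: "nat \<Rightarrow> real ^ 'n \<Rightarrow> 'n \<Rightarrow> int" where
  "zfloor m x = (\<lambda>i. \<lfloor>real m * x $ i\<rfloor>)"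

definition norm1 :: "real ^ 'n::finite \<Rightarrow> real" where
  "norm1 x = (\<Sum>i\<in>UNIV. \<bar>x $ i\<bar>)"

definition of_int_vec :: "('n \<Rightarrow> int) \<Rightarrow> real ^ 'n" where
  "of_int_vec k = (\<chi> i. real_of_int (k i))"

lemma norm1_nonneg: "0 \<le> norm1 x"
  by (simp add: norm1_def sum_nonneg)

lemma norm1_eq_0_iff: "norm1 x = 0 \<longleftrightarrow> x = 0"
  by (simp add: norm1_def sum_nonneg_eq_0_iff vec_eq_iff)

lemma norm1_triangle: "norm1 (x + y) \<le> norm1 x + norm1 y"
  unfolding norm1_def by (simp add: sum.distrib[symmetric] sum_mono abs_triangle_ineq)

lemma norm1_scaleR: "norm1 (c *\<^sub>R x) = \<bar>c\<bar> * norm1 x"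
  by (simp add: norm1_def abs_mult sum_distrib_left)

lemma norm_le_norm1: "norm x \<le> norm1 x"
  unfolding norm1_def by (rule norm_le_l1_cart)

lemma norm1_le_card_norm: "norm1 x \<le> real CARD('n) * norm (x :: real ^ 'n::finite)"
proof -
  have "norm1 x \<le> (\<Sum>i\<in>(UNIV :: 'n set). norm x)"
    unfolding norm1_def by (intro sum_mono component_le_norm_cart)
  then show ?thesis by simp
qed

lemma abs_floor_diff_approx: "\<bar>real_of_int \<bar>\<lfloor>u\<rfloor> - \<lfloor>v\<rfloor>\<bar> - \<bar>u - v\<bar>\<bar> \<le> 1"
proof -
  have "real_of_int \<lfloor>u\<rfloor> \<le> u" "u < real_of_int \<lfloor>u\<rfloor> + 1"
    "real_of_int \<lfloor>v\<rfloor> \<le> v" "v < real_of_int \<lfloor>v\<rfloor> + 1"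
    by linarith+
  then have "\<bar>real_of_int (\<lfloor>u\<rfloor> - \<lfloor>v\<rfloor>) - (u - v)\<bar> \<le> 1"
    unfolding abs_le_iff of_int_diff by linarith
  then show ?thesis
    using abs_triangle_ineq3[of "real_of_int (\<lfloor>u\<rfloor> - \<lfloor>v\<rfloor>)" "u - v"] by simp
qed

lemma znorm_zfloor_diff:
  fixes x y :: "real ^ 'n::finite"
  shows "\<bar>znorm (\<lambda>i. zfloor m y i - zfloor m x i) - real m * norm1 (y - x)\<bar> \<le> real CARD('n)"
proof -
  have "real m * \<bar>y $ i - x $ i\<bar> = \<bar>real m * y $ i - real m * x $ i\<bar>" for i
    by (simp only: right_diff_distrib[symmetric] abs_mult abs_of_nat)
  then have "real m * norm1 (y - x) = (\<Sum>i\<in>UNIV. \<bar>real m * y $ i - real m * x $ i\<bar>)"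
    by (simp add: norm1_def sum_distrib_left)
  then have "znorm (\<lambda>i. zfloor m y i - zfloor m x i) - real m * norm1 (y - x) =
      (\<Sum>i\<in>UNIV. real_of_int \<bar>\<lfloor>real m * y $ i\<rfloor> - \<lfloor>real m * x $ i\<rfloor>\<bar> - \<bar>real m * y $ i - real m * x $ i\<bar>)"
    by (simp add: znorm_def zfloor_def sum_subtractf)
  also have "\<bar>\<dots>\<bar> \<le> (\<Sum>i\<in>(UNIV :: 'n set). 1)"
    by (intro order_trans[OF sum_abs] sum_mono abs_floor_diff_approx)
  finally show ?thesis by simp
qed

lemma zfloor_zero: "zfloor m 0 = (\<lambda>_. 0)"
  by (simp add: zfloor_def)

lemma znorm_zfloor:
  fixes x :: "real ^ 'n::finite"
  shows "\<bar>znorm (zfloor m x) - real m * norm1 x\<bar> \<le> real CARD('n)"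
  using znorm_zfloor_diff[of m x 0] by (simp add: zfloor_zero)

lemma zfloor_scaleR:
  assumes "real m' * c = real m"
  shows "zfloor m' (c *\<^sub>R x) = zfloor m x"
proof -
  have eq: "real m' * (c * x $ i) = real m * x $ i" for i
    using assms by (metis mult.assoc)
  show ?thesis
    unfolding zfloor_def vector_scaleR_component real_scaleR_def eq ..
qed

lemma zfloor_of_int_vec: "zfloor m (of_int_vec k) = (\<lambda>i. int m * k i)"
proof -
  have "\<lfloor>real m * real_of_int (k i)\<rfloor> = int m * k i" for i
    by (metis floor_of_int of_int_mult of_int_of_nat_eq)
  then show ?thesis by (simp add: zfloor_def of_int_vec_def)
qed

lemma norm1_rounding:
  fixes z :: "real ^ 'n::finite"
  assumes "0 < q"
  shows "norm1 ((1 / real q) *\<^sub>R of_int_vec (zfloor q z) - z) \<le> real CARD('n) / real q"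
proof -
  have "\<bar>real_of_int \<lfloor>real q * z $ i\<rfloor> / real q - z $ i\<bar> \<le> 1 / real q" for i
  proof -
    have "real_of_int \<lfloor>real q * z $ i\<rfloor> / real q - z $ i = (real_of_int \<lfloor>real q * z $ i\<rfloor> - real q * z $ i) / real q"
      using assms by (simp add: field_simps)
    moreover have "\<bar>real_of_int \<lfloor>real q * z $ i\<rfloor> - real q * z $ i\<bar> \<le> 1" by linarith
    ultimately show ?thesis using assms by (simp add: abs_div divide_right_mono)
  qed
  then have "norm1 ((1 / real q) *\<^sub>R of_int_vec (zfloor q z) - z) \<le> (\<Sum>i\<in>(UNIV :: 'n set). 1 / real q)"
    unfolding norm1_def by (intro sum_mono) (simp add: of_int_vec_def zfloor_def)
  then show ?thesis by simp
qed

lemma rational_points_dense: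
  fixes x :: "real ^ 'n::finite"
  assumes S: "open S" "x \<in> closure S" and "0 < \<rho>"
  obtains q k where "0 < q" "(1 / real q) *\<^sub>R of_int_vec k \<in> S"
    "norm1 ((1 / real q) *\<^sub>R of_int_vec k - x) < \<rho>"
proof -
  define n where "n = real CARD('n)"
  have n: "n > 0" by (simp add: n_def)
  obtain z where "z \<in> S" and zx: "dist z x < \<rho> / (2 * n)"
    using S(2) \<open>0 < \<rho>\<close> n unfolding closure_approachable by (metis divide_pos_pos mult_pos_pos zero_less_numeral)
  then obtain r where r: "0 < r" "ball z r \<subseteq> S" using S(1) open_contains_ball by blast
  define t where "t = min r (\<rho> / 2)"
  define q where "q = nat \<lceil>n / t\<rceil> + 1"
  have "0 < t" using r \<open>0 < \<rho>\<close> by (simp add: t_def)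
  have "0 < q" "n / t < real q" by (simp_all add: q_def) linarith
  then have "n / real q < t" using \<open>0 < t\<close> n by (simp add: field_simps)
  define y where "y = (1 / real q) *\<^sub>R of_int_vec (zfloor q z)"
  have yz: "norm1 (y - z) < t"
    using norm1_rounding[OF \<open>0 < q\<close>, of z] \<open>n / real q < t\<close> by (simp add: y_def n_def)
  have "dist y z < r"
    using norm_le_norm1[of "y - z"] yz by (simp add: dist_norm t_def)
  then have "y \<in> S" using r(2) by (auto simp: dist_commute)
  moreover have "norm1 (y - x) < \<rho>"
  proof -
    have "norm1 (y - x) \<le> norm1 (y - z) + norm1 (z - x)"
      using norm1_triangle[of "y - z" "z - x"] by simp
    moreover have "norm1 (z - x) \<le> n * dist z x"
      using norm1_le_card_norm[of "z - x"] by (simp add: n_def dist_norm)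
    moreover have "n * dist z x < \<rho> / 2" using zx n by (simp add: field_simps)
    ultimately show ?thesis using yz by (simp add: t_def)
  qed
  ultimately show thesis using \<open>0 < q\<close> that unfolding y_def by blast
qed

lemma eventually_le_real_mult:
  assumes "0 < X"
  shows "\<forall>\<^sub>F m in sequentially. c \<le> real m * X"
proof -
  obtain M :: nat where M: "c / X < real M" using reals_Archimedean2 by blast
  have "c \<le> real m * X" if "M \<le> m" for m
  proof -
    have "c < real M * X" using M assms by (simp add: field_simps)
    also have "\<dots> \<le> real m * X" using that assms by (intro mult_right_mono) auto
    finally show ?thesis by simp
  qed
  then show ?thesis by (rule eventually_sequentiallyI)
qed

lemma tendsto_const_div_powr: "0 < s \<Longrightarrow> (\<lambda>m::nat. c / real m powr s) \<longlonglongrightarrow> 0"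
proof -
  assume "0 < s"
  then have "(\<lambda>m::nat. c * real m powr (- s)) \<longlonglongrightarrow> 0"
    by (intro tendsto_mult_right_zero tendsto_neg_powr filterlim_real_sequentially) auto
  then show ?thesis by (simp add: powr_minus divide_inverse)
qed

lemma filtermap_div_sequentially:
  assumes "0 < q"
  shows "filtermap (\<lambda>m::nat. m div q) sequentially = sequentially"
  unfolding filter_eq_iff eventually_filtermap eventually_sequentially
proof (intro allI iffI; elim exE)
  fix P :: "nat \<Rightarrow> bool" and N assume P: "\<forall>m\<ge>N. P (m div q)"
  have "P n" if "N \<le> n" for n
  proof -
    have "n \<le> n * q" using assms by simp
    then have "N \<le> n * q" using that by linarith
    then show ?thesis using P[rule_format, of "n * q"] assms by simp
  qed
  then show "\<exists>N. \<forall>n\<ge>N. P n" by blast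
next
  fix P :: "nat \<Rightarrow> bool" and N assume P: "\<forall>n\<ge>N. P n"
  have "P (m div q)" if "N * q \<le> m" for m
    using P div_le_mono[OF that, of q] assms by simp
  then show "\<exists>M. \<forall>m\<ge>M. P (m div q)" by blast
qed

lemma filterlim_div_sequentially:
  "0 < q \<Longrightarrow> filterlim (\<lambda>m::nat. m div q) sequentially sequentially"
  by (simp add: filterlim_def filtermap_div_sequentially)

lemma limsup_div_reindex:
  fixes u :: "nat \<Rightarrow> 'a::complete_linorder"
  assumes "0 < q"
  shows "limsup (\<lambda>m. u (m div q)) = limsup u"
proof (rule antisym)
  show "limsup (\<lambda>m. u (m div q)) \<le> limsup u"
    using Limsup_filtermap_ge[where f = "\<lambda>m. m div q" and F = sequentially and g = u]
    by (simp add: filtermap_div_sequentially[OF assms])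
  have "strict_mono (\<lambda>j. j * q)" using assms by (simp add: strict_mono_def)
  then have "limsup ((\<lambda>m. u (m div q)) \<circ> (\<lambda>j. j * q)) \<le> limsup (\<lambda>m. u (m div q))"
    by (rule limsup_subseq_mono)
  then show "limsup u \<le> limsup (\<lambda>m. u (m div q))" using assms by (simp add: comp_def)
qed

lemma limsup_le_of_eventually_close:
  fixes u v :: "nat \<Rightarrow> real"
  assumes "\<forall>\<^sub>F m in sequentially. \<bar>u m - v m\<bar> \<le> e"
  shows "limsup (\<lambda>m. ereal (u m)) \<le> limsup (\<lambda>m. ereal (v m)) + ereal e"
proof -
  have "\<forall>\<^sub>F m in sequentially. ereal (u m) \<le> ereal (v m) + ereal e"
    using assms by eventually_elim (use abs_le_D1 in fastforce)
  then have "limsup (\<lambda>m. ereal (u m)) \<le> limsup (\<lambda>m. ereal (v m) + ereal e)"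
    by (rule Limsup_mono)
  also have "\<dots> = limsup (\<lambda>m. ereal (v m)) + ereal e"
    using Limsup_add_ereal_right[where F = sequentially and c = "ereal e" and g = "\<lambda>m. ereal (v m)"]
    by simp
  finally show ?thesis .
qed

lemma limsup_eq_by_approximation:
  fixes u :: "nat \<Rightarrow> real"
  assumes approx: "\<And>e. 0 < e \<Longrightarrow> \<exists>v c. limsup (\<lambda>m. ereal (v m)) = ereal c \<and> \<bar>c - H\<bar> \<le> e \<and>
                     (\<forall>\<^sub>F m in sequentially. \<bar>u m - v m\<bar> \<le> e)"
  shows "limsup (\<lambda>m. ereal (u m)) = ereal H"
proof (rule antisym)
  show "limsup (\<lambda>m. ereal (u m)) \<le> ereal H"
  proof (rule ereal_le_epsilon2)
    fix e :: real assume "0 < e"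
    then obtain v c where v: "limsup (\<lambda>m. ereal (v m)) = ereal c" "\<bar>c - H\<bar> \<le> e / 2"
      and uv: "\<forall>\<^sub>F m in sequentially. \<bar>u m - v m\<bar> \<le> e / 2"
      using approx[of "e / 2"] by auto
    have "limsup (\<lambda>m. ereal (u m)) \<le> ereal c + ereal (e / 2)"
      using limsup_le_of_eventually_close[OF uv] by (simp only: v(1))
    also have "\<dots> \<le> ereal H + ereal e" using abs_le_D1[OF v(2)] by simp
    finally show "limsup (\<lambda>m. ereal (u m)) \<le> ereal H + ereal e" .
  qed
  show "ereal H \<le> limsup (\<lambda>m. ereal (u m))"
  proof (rule ereal_le_epsilon2)
    fix e :: real assume "0 < e"
    then obtain v c where v: "limsup (\<lambda>m. ereal (v m)) = ereal c" "\<bar>c - H\<bar> \<le> e / 2"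
      and uv: "\<forall>\<^sub>F m in sequentially. \<bar>u m - v m\<bar> \<le> e / 2"
      using approx[of "e / 2"] by auto
    have "\<forall>\<^sub>F m in sequentially. \<bar>v m - u m\<bar> \<le> e / 2"
      using uv by (simp add: abs_minus_commute)
    then have vu: "ereal c \<le> limsup (\<lambda>m. ereal (u m)) + ereal (e / 2)"
      unfolding v(1)[symmetric] by (rule limsup_le_of_eventually_close)
    have "ereal H \<le> ereal c + ereal (e / 2)" using abs_le_D2[OF v(2)] by simp
    also have "\<dots> \<le> limsup (\<lambda>m. ereal (u m)) + ereal (e / 2) + ereal (e / 2)"
      using vu by (rule add_right_mono)
    also have "\<dots> = limsup (\<lambda>m. ereal (u m)) + ereal e"
      by (metis add.assoc field_sum_of_halves plus_ereal.simps(1))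
    finally show "ereal H \<le> limsup (\<lambda>m. ereal (u m)) + ereal e" .
  qed
qed

lemma tendsto_by_approximation:
  fixes u :: "nat \<Rightarrow> real"
  assumes approx: "\<And>e. 0 < e \<Longrightarrow> \<exists>v c. v \<longlonglongrightarrow> c \<and> \<bar>c - H\<bar> \<le> e \<and>
                     (\<forall>\<^sub>F m in sequentially. \<bar>u m - v m\<bar> \<le> e)"
  shows "u \<longlonglongrightarrow> H"
proof (rule tendstoI)
  fix e :: real assume "0 < e"
  then obtain v c where v: "v \<longlonglongrightarrow> c" "\<bar>c - H\<bar> \<le> e / 3"
    and uv: "\<forall>\<^sub>F m in sequentially. \<bar>u m - v m\<bar> \<le> e / 3"
    using approx[of "e / 3"] by auto
  have "\<forall>\<^sub>F m in sequentially. dist (v m) c < e / 3"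
    using v(1) \<open>0 < e\<close> by (intro tendstoD) simp_all
  with uv show "\<forall>\<^sub>F m in sequentially. dist (u m) H < e"
  proof eventually_elim
    case (elim m)
    have "u m - H = (u m - v m + (v m - c)) + (c - H)" by simp
    then have "\<bar>u m - H\<bar> \<le> \<bar>u m - v m + (v m - c)\<bar> + \<bar>c - H\<bar>"
      by (metis abs_triangle_ineq)
    also have "\<bar>u m - v m + (v m - c)\<bar> \<le> \<bar>u m - v m\<bar> + \<bar>v m - c\<bar>"
      by (rule abs_triangle_ineq)
    finally have "\<bar>u m - H\<bar> \<le> \<bar>u m - v m\<bar> + \<bar>v m - c\<bar> + \<bar>c - H\<bar>" by simp
    then show ?case using elim v(2) unfolding dist_real_def by linarith
  qed
qed

lemma filterlim_mult_div_sequentially: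
  assumes "0 < q"
  shows "filterlim (\<lambda>m::nat. q * (m div q)) sequentially sequentially"
  unfolding filterlim_at_top
proof
  fix Z :: nat
  have "Z \<le> q * (m div q)" if "q * Z \<le> m" for m
  proof -
    have "Z \<le> m div q" using div_le_mono[OF that, of q] assms by simp
    also have "\<dots> \<le> q * (m div q)" using assms by simp
    finally show ?thesis .
  qed
  then show "\<forall>\<^sub>F m in sequentially. Z \<le> q * (m div q)"
    by (rule eventually_sequentiallyI)
qed

lemma tendsto_mult_div_ratio:
  assumes "0 < q"
  shows "(\<lambda>m::nat. real (q * (m div q)) / real m) \<longlonglongrightarrow> 1"
proof -
  have "(\<lambda>m. real (q * (m div q)) / real m - 1) \<longlonglongrightarrow> 0"
  proof (rule Lim_null_comparison)
    show "\<forall>\<^sub>F m in sequentially. norm (real (q * (m div q)) / real m - 1) \<le> real q / real m"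
    proof (rule eventually_sequentiallyI[of 1])
      fix m :: nat assume "1 \<le> m"
      have "real (q * (m div q)) = real m - real (m mod q)"
        by (simp add: minus_mod_eq_mult_div[symmetric] of_nat_diff)
      then have "real (q * (m div q)) / real m - 1 = - (real (m mod q) / real m)"
        using \<open>1 \<le> m\<close> by (simp add: diff_divide_distrib)
      moreover have "real (m mod q) \<le> real q" using assms by simp
      ultimately show "norm (real (q * (m div q)) / real m - 1) \<le> real q / real m"
        by (simp add: divide_right_mono)
    qed
    show "(\<lambda>m. real q / real m) \<longlonglongrightarrow> 0" by (rule lim_const_over_n)
  qed
  then show ?thesis by (simp add: LIM_zero_iff)
qed

lemma mult_div_scale_bounds:
  fixes q m :: nat
  assumes q: "0 < q" and large: "4 * q \<le> q * (m div q)"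
  shows "q * (m div q) \<le> m" "4 * (m - q * (m div q)) \<le> q * (m div q)" "0 < q * (m div q)"
    "(real (m - q * (m div q)) + 1) / real (q * (m div q)) \<le> 2 * real q / real m"
proof -
  define m' where "m' = q * (m div q)"
  have m'm: "m' \<le> m" "m - m' < q" unfolding m'_def
    using q by (simp_all add: minus_mod_eq_mult_div[symmetric])
  have "4 * q \<le> m'" using large by (simp add: m'_def)
  then have "4 * (m - m') \<le> m'" "0 < m'" using m'm q by linarith+
  moreover have "(real (m - m') + 1) / real m' \<le> 2 * real q / real m"
  proof -
    have "m - m' + 1 \<le> q" "m \<le> 2 * m'" using m'm \<open>4 * q \<le> m'\<close> by linarith+
    then have "real (m - m') + 1 \<le> real q" "real m \<le> 2 * real m'"
      using of_nat_mono by fastforce+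
    then have "(real (m - m') + 1) / real m' \<le> 2 * real q / (2 * real m')"
      using \<open>0 < m'\<close> by (simp add: divide_right_mono)
    also have "\<dots> \<le> 2 * real q / real m"
      using \<open>real m \<le> 2 * real m'\<close> \<open>0 < m'\<close> m'm(1) by (intro divide_left_mono) simp_all
    finally show ?thesis .
  qed
  ultimately show "q * (m div q) \<le> m" "4 * (m - q * (m div q)) \<le> q * (m div q)" "0 < q * (m div q)"
    "(real (m - q * (m div q)) + 1) / real (q * (m div q)) \<le> 2 * real q / real m"
    using m'm(1) unfolding m'_def by simp_all
qed

section \<open>The rescaled heights f m\<close>

context lattice_height
begin

definition f :: "nat \<Rightarrow> real ^ 'n \<Rightarrow> real" where
  "f m x = h (zcomb L (zfloor m x)) / real m powr s"

lemma f_rescale: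
  assumes "0 < m" "0 < m'"
  shows "f m x = (real m' / real m) powr s * f m' ((real m / real m') *\<^sub>R x)"
proof -
  have "zfloor m' ((real m / real m') *\<^sub>R x) = zfloor m x"
    using assms by (intro zfloor_scaleR) simp
  then show ?thesis using assms by (simp add: f_def powr_divide)
qed

lemma f_mult_inverse:
  assumes "0 < q"
  shows "f (q * j) ((1 / real q) *\<^sub>R x) = f j x / real q powr s"
proof -
  have "zfloor (q * j) ((1 / real q) *\<^sub>R x) = zfloor j x"
    using assms by (intro zfloor_scaleR) simp
  then show ?thesis by (simp add: f_def powr_mult)
qed

lemma f_of_int_vec: "f m (of_int_vec k) = h (zsmult (int m) (zcomb L k)) / real m powr s"
  by (simp add: f_def zfloor_of_int_vec zsmult_zcomb)

lemma f_zero_tendsto: "(\<lambda>m. f m 0) \<longlonglongrightarrow> 0"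
  using tendsto_const_div_powr[OF s_pos, of "h 0"] by (simp add: f_def zfloor_zero zcomb_def)

lemma f_eventually_bounded:
  assumes X: "0 < norm1 x"
  obtains B where "0 \<le> B" "\<forall>\<^sub>F m in sequentially. \<bar>f m x\<bar> \<le> B"
proof -
  obtain C R where CR: "\<And>a. R \<le> znorm a \<Longrightarrow> \<bar>h (zcomb L a)\<bar> \<le> C * znorm a powr s"
    using growth by blast
  define n where "n = real CARD('n)"
  have n: "0 \<le> n" by (simp add: n_def)
  have bound: "\<bar>f m x\<bar> \<le> \<bar>C\<bar> * (2 * norm1 x) powr s" if m: "\<bar>R\<bar> + n + 1 \<le> real m * norm1 x" for m
  proof -
    define a where "a = zfloor m x"
    have "0 < real m * norm1 x" using m n by linarith
    then have m0: "0 < real m" using X by (simp add: zero_less_mult_iff)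
    have "\<bar>znorm a - real m * norm1 x\<bar> \<le> n" unfolding a_def n_def by (rule znorm_zfloor)
    then have "R \<le> znorm a" "znorm a \<le> 2 * (real m * norm1 x)" using m n by linarith+
    then have "\<bar>h (zcomb L a)\<bar> \<le> \<bar>C\<bar> * (2 * (real m * norm1 x)) powr s"
      using CR[of a] znorm_nonneg[of a] s_pos
      by (meson abs_ge_self abs_ge_zero mult_mono order_trans powr_mono2 powr_ge_zero less_imp_le)
    also have "\<dots> = \<bar>C\<bar> * (2 * norm1 x) powr s * real m powr s"
      using X m0 by (simp add: powr_mult)
    finally show ?thesis using m0 by (simp add: f_def a_def abs_div pos_divide_le_eq)
  qed
  have "\<forall>\<^sub>F m in sequentially. \<bar>R\<bar> + n + 1 \<le> real m * norm1 x"
    using X by (rule eventually_le_real_mult)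
  then have "\<forall>\<^sub>F m in sequentially. \<bar>f m x\<bar> \<le> \<bar>C\<bar> * (2 * norm1 x) powr s"
    by (rule eventually_mono) (rule bound)
  then show thesis by (intro that) simp_all
qed

lemma f_diff_bound:
  assumes lip: "\<And>a b. R \<le> znorm a \<Longrightarrow> 2 * znorm (\<lambda>j. b j - a j) \<le> znorm a \<Longrightarrow>
       \<bar>h (zcomb L b) - h (zcomb L a)\<bar> \<le> C * znorm (\<lambda>j. b j - a j) * znorm a powr (s - 1)"
    and C: "0 \<le> C" and R: "0 < R" and X: "0 < norm1 x"
    and m: "R + 6 * real CARD('n) + 1 \<le> real m * norm1 x" and y: "norm1 (y - x) \<le> norm1 x / 4"
  shows "\<bar>f m y - f m x\<bar>
    \<le> C * 2 powr \<bar>s - 1\<bar> * norm1 x powr (s - 1) * (norm1 (y - x) + real CARD('n) / real m)"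
proof -
  define n a b d where "n = real CARD('n)" and "a = zfloor m x" and "b = zfloor m y" and "d = norm1 (y - x)"
  have n: "0 \<le> n" by (simp add: n_def)
  have m': "R + 6 * n + 1 \<le> real m * norm1 x" using m by (simp add: n_def)
  then have mX: "0 < real m * norm1 x" using n R by linarith
  then have m0: "0 < real m" using X by (simp add: zero_less_mult_iff)
  have d: "0 \<le> d" "real m * d \<le> real m * norm1 x / 4"
    using y m0 by (simp_all add: d_def norm1_nonneg)
  have a: "real m * norm1 x - n \<le> znorm a" "znorm a \<le> real m * norm1 x + n"
    using znorm_zfloor[of m x] by (simp_all add: a_def n_def abs_le_iff)
  have ba: "znorm (\<lambda>j. b j - a j) \<le> real m * d + n"
    using znorm_zfloor_diff[of m y x] by (simp add: a_def b_def d_def n_def abs_le_iff)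
  have "R \<le> znorm a" "2 * znorm (\<lambda>j. b j - a j) \<le> znorm a"
    using a ba d m' n R by linarith+
  then have "\<bar>h (zcomb L b) - h (zcomb L a)\<bar> \<le> C * znorm (\<lambda>j. b j - a j) * znorm a powr (s - 1)"
    by (rule lip)
  also have "\<dots> \<le> C * (real m * d + n) * (2 powr \<bar>s - 1\<bar> * (real m * norm1 x) powr (s - 1))"
  proof (intro mult_mono mult_left_mono)
    show "znorm a powr (s - 1) \<le> 2 powr \<bar>s - 1\<bar> * (real m * norm1 x) powr (s - 1)"
      using a n m' R mX by (intro powr_le_of_comparable) linarith+
  qed (use ba C d n znorm_nonneg in auto)
  also have "\<dots> = C * 2 powr \<bar>s - 1\<bar> * norm1 x powr (s - 1) * (d + n / real m) * real m powr s"
    using m0 X by (simp add: powr_mult powr_diff field_simps)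
  finally show ?thesis
    using m0 by (simp add: f_def a_def b_def d_def n_def diff_divide_distrib[symmetric] abs_div pos_divide_le_eq)
qed

lemma f_local_lipschitz:
  assumes X: "0 < norm1 x"
  obtains K where "0 \<le> K"
    "\<forall>\<^sub>F m in sequentially. \<forall>y. norm1 (y - x) \<le> norm1 x / 4 \<longrightarrow>
       \<bar>f m y - f m x\<bar> \<le> K * (norm1 (y - x) + 1 / real m)"
proof -
  obtain C R where C: "0 \<le> C" and R: "0 < R"
    and lip: "\<And>a b. R \<le> znorm a \<Longrightarrow> 2 * znorm (\<lambda>j. b j - a j) \<le> znorm a \<Longrightarrow>
       \<bar>h (zcomb L b) - h (zcomb L a)\<bar> \<le> C * znorm (\<lambda>j. b j - a j) * znorm a powr (s - 1)"
    using local_lipschitz by blast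
  define n where "n = real CARD('n)"
  define K' where "K' = C * 2 powr \<bar>s - 1\<bar> * norm1 x powr (s - 1)"
  have n: "0 \<le> n" and K': "0 \<le> K'" using C by (simp_all add: n_def K'_def)
  have bound: "\<bar>f m y - f m x\<bar> \<le> K' * (1 + n) * (norm1 (y - x) + 1 / real m)"
    if m: "R + 6 * n + 1 \<le> real m * norm1 x" and y: "norm1 (y - x) \<le> norm1 x / 4" for m y
  proof -
    have "\<bar>f m y - f m x\<bar> \<le> K' * (norm1 (y - x) + n / real m)"
      using f_diff_bound[OF lip C R X _ y] m by (simp add: K'_def n_def)
    also have "\<dots> \<le> K' * (1 + n) * (norm1 (y - x) + 1 / real m)"
      using K' n norm1_nonneg[of "y - x"] by (simp add: algebra_simps mult_left_mono)
    finally show ?thesis .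
  qed
  have "\<forall>\<^sub>F m in sequentially. R + 6 * n + 1 \<le> real m * norm1 x"
    using X by (rule eventually_le_real_mult)
  then have "\<forall>\<^sub>F m in sequentially. \<forall>y. norm1 (y - x) \<le> norm1 x / 4 \<longrightarrow>
       \<bar>f m y - f m x\<bar> \<le> K' * (1 + n) * (norm1 (y - x) + 1 / real m)"
    by (rule eventually_mono) (use bound in blast)
  moreover have "0 \<le> K' * (1 + n)" using K' n by simp
  ultimately show thesis using that by blast
qed

lemma f_compare_two_scales:
  assumes K: "0 \<le> K" and B: "0 \<le> B" and m': "0 < m'" "m' \<le> m" "4 * (m - m') \<le> m'"
    and lip: "\<forall>y. norm1 (y - x) \<le> norm1 x / 4 \<longrightarrow> \<bar>f m' y - f m' x\<bar> \<le> K * (norm1 (y - x) + 1 / real m')"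
    and bounded: "\<bar>f m' x\<bar> \<le> B"
  shows "\<bar>f m x - f m' x\<bar>
    \<le> (B + K * (norm1 x + 1) * 2) * (\<bar>(real m' / real m) powr s - 1\<bar> + (real (m - m') + 1) / real m')"
proof -
  define y where "y = (real m / real m') *\<^sub>R x"
  define r where "r = (real (m - m') + 1) / real m'"
  define C where "C = B + K * (norm1 x + 1) * 2"
  define E where "E = K * (norm1 x + 1) * r"
  have m'_pos: "0 < real m'" using m'(1) by simp
  have "y - x = (real (m - m') / real m') *\<^sub>R x"
    using m'(2,3) m'_pos by (simp add: y_def of_nat_diff diff_divide_distrib scaleR_diff_left)
  then have yx: "norm1 (y - x) = real (m - m') / real m' * norm1 x"
    by (simp add: norm1_scaleR)
  have "real (m - m') / real m' \<le> 1 / 4" using m'(2,3) m'_pos by (simp add: field_simps)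
  then have "norm1 (y - x) \<le> norm1 x / 4"
    unfolding yx using norm1_nonneg[of x] by (metis mult_right_mono mult.commute times_divide_eq_right mult_1_right)
  then have "\<bar>f m' y - f m' x\<bar> \<le> K * (norm1 (y - x) + 1 / real m')" using lip by blast
  also have "norm1 (y - x) + 1 / real m' \<le> (norm1 x + 1) * r"
    unfolding yx r_def using m'_pos norm1_nonneg[of x] by (simp add: field_simps)
  finally have close: "\<bar>f m' y - f m' x\<bar> \<le> E"
    using K unfolding E_def by (metis mult.assoc mult_left_mono order_trans)
  have KX: "0 \<le> K * (norm1 x + 1)" using K norm1_nonneg[of x] by simp
  have "r \<le> 2" using m'(2,3) m'_pos by (simp add: r_def field_simps)
  then have "E \<le> K * (norm1 x + 1) * 2" unfolding E_def using KX by (rule mult_left_mono)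
  then have fy: "\<bar>f m' y\<bar> \<le> C" using close bounded unfolding C_def by linarith
  have "K * (norm1 x + 1) \<le> C" using B KX unfolding C_def by linarith
  moreover have "0 \<le> r" using m'_pos by (simp add: r_def)
  ultimately have "E \<le> C * r" unfolding E_def by (rule mult_right_mono)
  have "f m x = (real m' / real m) powr s * f m' y"
    unfolding y_def using m' by (intro f_rescale) simp_all
  then have "f m x - f m' x = ((real m' / real m) powr s - 1) * f m' y + (f m' y - f m' x)"
    by (simp add: algebra_simps)
  then have "\<bar>f m x - f m' x\<bar> \<le> \<bar>(real m' / real m) powr s - 1\<bar> * \<bar>f m' y\<bar> + E"
    using close by (simp add: abs_mult[symmetric])
  also have "\<dots> \<le> \<bar>(real m' / real m) powr s - 1\<bar> * C + C * r"
    using fy \<open>E \<le> C * r\<close> by (intro add_mono mult_left_mono) simp_all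
  finally show ?thesis by (simp add: r_def C_def algebra_simps)
qed

lemma f_compare_scales:
  assumes X: "0 < norm1 x"
  obtains C where "0 \<le> C" "\<forall>\<^sub>F m' in sequentially. \<forall>m. m' \<le> m \<longrightarrow> 4 * (m - m') \<le> m' \<longrightarrow>
       \<bar>f m x - f m' x\<bar> \<le> C * (\<bar>(real m' / real m) powr s - 1\<bar> + (real (m - m') + 1) / real m')"
proof -
  obtain K where K: "0 \<le> K" and lip: "\<forall>\<^sub>F m in sequentially. \<forall>y. norm1 (y - x) \<le> norm1 x / 4 \<longrightarrow>
       \<bar>f m y - f m x\<bar> \<le> K * (norm1 (y - x) + 1 / real m)"
    using f_local_lipschitz[OF X] by blast
  obtain B where B: "0 \<le> B" and bounded: "\<forall>\<^sub>F m in sequentially. \<bar>f m x\<bar> \<le> B"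
    using f_eventually_bounded[OF X] by blast
  have "\<forall>\<^sub>F m' in sequentially. 0 < m' \<and>
      (\<forall>y. norm1 (y - x) \<le> norm1 x / 4 \<longrightarrow> \<bar>f m' y - f m' x\<bar> \<le> K * (norm1 (y - x) + 1 / real m')) \<and>
      \<bar>f m' x\<bar> \<le> B"
    using eventually_gt_at_top[of 0] lip bounded by eventually_elim blast
  moreover have "0 \<le> B + K * (norm1 x + 1) * 2" using B K norm1_nonneg[of x] by simp
  ultimately show thesis
    by (intro that[of "B + K * (norm1 x + 1) * 2"], simp, elim eventually_mono)
      (blast intro: f_compare_two_scales[OF K B])
qed

lemma f_diff_rounded_scale_tendsto:
  assumes q: "0 < q"
  shows "(\<lambda>m. f m x - f (q * (m div q)) x) \<longlonglongrightarrow> 0"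
proof (cases "x = 0")
  case True
  have "(\<lambda>m. f (q * (m div q)) 0) \<longlonglongrightarrow> 0"
    using filterlim_compose[OF f_zero_tendsto filterlim_mult_div_sequentially[OF q]] .
  with f_zero_tendsto show ?thesis using True by (simp add: tendsto_diff[where b = 0, simplified])
next
  case False
  then have X: "0 < norm1 x" using norm1_nonneg[of x] norm1_eq_0_iff[of x] by linarith
  obtain C where "0 \<le> C" and C: "\<forall>\<^sub>F m' in sequentially. \<forall>m. m' \<le> m \<longrightarrow> 4 * (m - m') \<le> m' \<longrightarrow>
       \<bar>f m x - f m' x\<bar> \<le> C * (\<bar>(real m' / real m) powr s - 1\<bar> + (real (m - m') + 1) / real m')"
    using f_compare_scales[OF X] by blast
  define g where "g m = C * (\<bar>(real (q * (m div q)) / real m) powr s - 1\<bar> + 2 * real q / real m)" for m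
  show ?thesis
  proof (rule Lim_null_comparison)
    have "\<forall>\<^sub>F m in sequentially. \<forall>m''. q * (m div q) \<le> m'' \<longrightarrow> 4 * (m'' - q * (m div q)) \<le> q * (m div q) \<longrightarrow>
       \<bar>f m'' x - f (q * (m div q)) x\<bar> \<le> C * (\<bar>(real (q * (m div q)) / real m'') powr s - 1\<bar> +
          (real (m'' - q * (m div q)) + 1) / real (q * (m div q)))"
      using eventually_compose_filterlim[OF C filterlim_mult_div_sequentially[OF q]] .
    moreover have "\<forall>\<^sub>F m in sequentially. 4 * q \<le> q * (m div q)"
      using filterlim_mult_div_sequentially[OF q] unfolding filterlim_at_top by blast
    ultimately show "\<forall>\<^sub>F m in sequentially. norm (f m x - f (q * (m div q)) x) \<le> g m"
    proof eventually_elim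
      case (elim m)
      note bounds = mult_div_scale_bounds[OF q elim(2)]
      have "\<bar>f m x - f (q * (m div q)) x\<bar> \<le> C * (\<bar>(real (q * (m div q)) / real m) powr s - 1\<bar> +
          (real (m - q * (m div q)) + 1) / real (q * (m div q)))"
        using elim(1) bounds(1,2) by blast
      also have "\<dots> \<le> g m"
        unfolding g_def using bounds(4) \<open>0 \<le> C\<close> by (intro mult_left_mono add_left_mono) simp_all
      finally show ?case by simp
    qed
    have "(\<lambda>m. (real (q * (m div q)) / real m) powr s) \<longlonglongrightarrow> 1 powr s"
      by (rule tendsto_powr[OF tendsto_mult_div_ratio[OF q] tendsto_const]) simp
    then have "(\<lambda>m. \<bar>(real (q * (m div q)) / real m) powr s - 1\<bar>) \<longlonglongrightarrow> 0"
      by (intro tendsto_rabs_zero) (simp add: LIM_zero_iff)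
    moreover have "(\<lambda>m. 2 * real q / real m) \<longlonglongrightarrow> 0" by (rule lim_const_over_n)
    ultimately show "g \<longlonglongrightarrow> 0"
      unfolding g_def using tendsto_mult_right_zero tendsto_add_zero by blast
  qed
qed

context
  fixes hhat :: "real ^ 'n \<Rightarrow> real"
  assumes hhat_int: "\<And>k. limsup (\<lambda>m. ereal (f m (of_int_vec k))) = ereal (hhat (of_int_vec k))"
    and hhat_hom: "\<And>t x. 0 \<le> t \<Longrightarrow> hhat (t *\<^sub>R x) = t powr s * hhat x"
    and hhat_cont: "continuous_on UNIV hhat"
begin

lemma hhat_zero: "hhat 0 = 0"
  using hhat_hom[of 0 0] s_pos by simp

lemma hhat_inverse_scale:
  assumes "0 < q"
  shows "hhat ((1 / real q) *\<^sub>R x) = hhat x / real q powr s"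
  using assms by (simp add: hhat_hom powr_divide)

lemma limsup_f_rational:
  fixes k :: "'n \<Rightarrow> int"
  assumes q: "0 < q"
  defines "x \<equiv> (1 / real q) *\<^sub>R of_int_vec k"
  shows "limsup (\<lambda>m. ereal (f m x)) = ereal (hhat x)"
proof -
  have "limsup (\<lambda>m. ereal (f (q * (m div q)) x)) = limsup (\<lambda>j. ereal (f (q * j) x))"
    using limsup_div_reindex[OF q, of "\<lambda>j. ereal (f (q * j) x)"] .
  also have "\<dots> = limsup (\<lambda>j. ereal (f j (of_int_vec k)) * ereal (1 / real q powr s))"
    using q by (simp add: x_def f_mult_inverse)
  also have "\<dots> = limsup (\<lambda>j. ereal (f j (of_int_vec k))) * ereal (1 / real q powr s)"
    by (rule limsup_ereal_mult_right) simp
  also have "\<dots> = ereal (hhat x)"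
    using q by (simp add: hhat_int x_def hhat_inverse_scale)
  finally have rounded: "limsup (\<lambda>m. ereal (f (q * (m div q)) x)) = ereal (hhat x)" .
  have "(\<lambda>m. ereal (f m x - f (q * (m div q)) x)) \<longlonglongrightarrow> ereal 0"
    using f_diff_rounded_scale_tendsto[OF q] by (rule tendsto_ereal)
  then have "limsup (\<lambda>m. ereal (f m x - f (q * (m div q)) x) + ereal (f (q * (m div q)) x))
      = ereal 0 + limsup (\<lambda>m. ereal (f (q * (m div q)) x))"
    by (rule ereal_limsup_lim_add) simp
  then show ?thesis by (simp add: rounded)
qed

lemma tendsto_f_rational:
  assumes q: "0 < q" and lim: "(\<lambda>m. f m (of_int_vec k)) \<longlonglongrightarrow> hhat (of_int_vec k)"
  defines "x \<equiv> (1 / real q) *\<^sub>R of_int_vec k"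
  shows "(\<lambda>m. f m x) \<longlonglongrightarrow> hhat x"
proof -
  have "(\<lambda>m. f (m div q) (of_int_vec k) / real q powr s) \<longlonglongrightarrow> hhat (of_int_vec k) / real q powr s"
    using q by (intro tendsto_divide filterlim_compose[OF lim filterlim_div_sequentially[OF q]] tendsto_const) simp
  then have "(\<lambda>m. f (q * (m div q)) x) \<longlonglongrightarrow> hhat x"
    using q by (simp add: x_def f_mult_inverse hhat_inverse_scale)
  then have "(\<lambda>m. (f m x - f (q * (m div q)) x) + f (q * (m div q)) x) \<longlonglongrightarrow> 0 + hhat x"
    by (intro tendsto_add f_diff_rounded_scale_tendsto q)
  then show ?thesis by simp
qed

lemma rational_approximation:
  assumes X: "0 < norm1 x" and S: "open S" "x \<in> closure S" and e: "0 < e"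
  obtains q k where "0 < q" "(1 / real q) *\<^sub>R of_int_vec k \<in> S"
    "\<bar>hhat ((1 / real q) *\<^sub>R of_int_vec k) - hhat x\<bar> \<le> e"
    "\<forall>\<^sub>F m in sequentially. \<bar>f m x - f m ((1 / real q) *\<^sub>R of_int_vec k)\<bar> \<le> e"
proof -
  obtain K where K: "0 \<le> K" and lip: "\<forall>\<^sub>F m in sequentially. \<forall>y. norm1 (y - x) \<le> norm1 x / 4 \<longrightarrow>
       \<bar>f m y - f m x\<bar> \<le> K * (norm1 (y - x) + 1 / real m)"
    using f_local_lipschitz[OF X] by blast
  obtain \<delta> where "0 < \<delta>" and \<delta>: "\<And>y. dist y x < \<delta> \<Longrightarrow> dist (hhat y) (hhat x) < e"
    using hhat_cont e unfolding continuous_on_iff by blast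
  define \<rho> where "\<rho> = min \<delta> (min (norm1 x / 4) (e / (2 * (K + 1))))"
  have "0 < \<rho>" using \<open>0 < \<delta>\<close> X e K by (simp add: \<rho>_def)
  then obtain q k where q: "0 < q" "(1 / real q) *\<^sub>R of_int_vec k \<in> S"
    and close: "norm1 ((1 / real q) *\<^sub>R of_int_vec k - x) < \<rho>"
    using rational_points_dense[OF S] by blast
  define y where "y = (1 / real q) *\<^sub>R of_int_vec k"
  have "dist y x < \<delta>"
    using norm_le_norm1[of "y - x"] close by (simp add: dist_norm y_def \<rho>_def)
  then have "\<bar>hhat y - hhat x\<bar> \<le> e" using \<delta> by (simp add: dist_real_def less_imp_le)
  have "K * norm1 (y - x) \<le> K * (e / (2 * (K + 1)))"
    using close K by (intro mult_left_mono) (simp_all add: y_def \<rho>_def)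
  also have "\<dots> \<le> e / 2" using K e by (simp add: field_simps)
  finally have Ky: "K * norm1 (y - x) \<le> e / 2" .
  have "\<forall>\<^sub>F m in sequentially. K / real m < e / 2"
    using e by (intro order_tendstoD(2)[OF lim_const_over_n]) simp
  with lip have "\<forall>\<^sub>F m in sequentially. \<bar>f m x - f m y\<bar> \<le> e"
  proof eventually_elim
    case (elim m)
    have "norm1 (y - x) \<le> norm1 x / 4" using close by (simp add: y_def \<rho>_def)
    then have "\<bar>f m y - f m x\<bar> \<le> K * norm1 (y - x) + K / real m"
      using elim(1) by (simp add: distrib_left)
    moreover have "\<bar>f m x - f m y\<bar> = \<bar>f m y - f m x\<bar>" by (rule abs_minus_commute)
    ultimately show ?case using Ky elim(2) by linarith
  qed
  then show thesis using that q \<open>\<bar>hhat y - hhat x\<bar> \<le> e\<close> unfolding y_def by blast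
qed

lemma limsup_f: "limsup (\<lambda>m. ereal (f m x)) = ereal (hhat x)"
proof (cases "x = 0")
  case True
  then show ?thesis
    using lim_imp_Limsup[OF trivial_limit_sequentially tendsto_ereal[OF f_zero_tendsto]]
    by (simp add: hhat_zero)
next
  case False
  then have X: "0 < norm1 x" using norm1_nonneg[of x] norm1_eq_0_iff[of x] by linarith
  show ?thesis
  proof (rule limsup_eq_by_approximation)
    fix e :: real assume "0 < e"
    obtain q k where q: "0 < q"
      and hhat_close: "\<bar>hhat ((1 / real q) *\<^sub>R of_int_vec k) - hhat x\<bar> \<le> e"
      and f_close: "\<forall>\<^sub>F m in sequentially. \<bar>f m x - f m ((1 / real q) *\<^sub>R of_int_vec k)\<bar> \<le> e"
      using rational_approximation[OF X open_UNIV _ \<open>0 < e\<close>] by auto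
    show "\<exists>v c. limsup (\<lambda>m. ereal (v m)) = ereal c \<and> \<bar>c - hhat x\<bar> \<le> e \<and>
        (\<forall>\<^sub>F m in sequentially. \<bar>f m x - v m\<bar> \<le> e)"
      by (intro exI[of _ "\<lambda>m. f m ((1 / real q) *\<^sub>R of_int_vec k)"]
          exI[of _ "hhat ((1 / real q) *\<^sub>R of_int_vec k)"] conjI limsup_f_rational[OF q] hhat_close f_close)
  qed
qed

lemma tendsto_f_closure_cone:
  assumes S: "open S" and cone: "\<And>y c. y \<in> S \<Longrightarrow> 0 < c \<Longrightarrow> c *\<^sub>R y \<in> S"
    and int: "\<And>k. of_int_vec k \<in> S \<Longrightarrow> (\<lambda>m. f m (of_int_vec k)) \<longlonglongrightarrow> hhat (of_int_vec k)"
    and x: "x \<in> closure S"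
  shows "(\<lambda>m. f m x) \<longlonglongrightarrow> hhat x"
proof (cases "x = 0")
  case True
  then show ?thesis using f_zero_tendsto by (simp add: hhat_zero)
next
  case False
  then have X: "0 < norm1 x" using norm1_nonneg[of x] norm1_eq_0_iff[of x] by linarith
  show ?thesis
  proof (rule tendsto_by_approximation)
    fix e :: real assume "0 < e"
    obtain q k where q: "0 < q" and in_S: "(1 / real q) *\<^sub>R of_int_vec k \<in> S"
      and hhat_close: "\<bar>hhat ((1 / real q) *\<^sub>R of_int_vec k) - hhat x\<bar> \<le> e"
      and f_close: "\<forall>\<^sub>F m in sequentially. \<bar>f m x - f m ((1 / real q) *\<^sub>R of_int_vec k)\<bar> \<le> e"
      using rational_approximation[OF X S x \<open>0 < e\<close>] by blast
    have "real q *\<^sub>R ((1 / real q) *\<^sub>R of_int_vec k) \<in> S"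
      by (rule cone[OF in_S]) (simp add: q)
    then have k_in: "of_int_vec k \<in> S" using q by simp
    show "\<exists>v c. v \<longlonglongrightarrow> c \<and> \<bar>c - hhat x\<bar> \<le> e \<and>
        (\<forall>\<^sub>F m in sequentially. \<bar>f m x - v m\<bar> \<le> e)"
      by (intro exI[of _ "\<lambda>m. f m ((1 / real q) *\<^sub>R of_int_vec k)"]
          exI[of _ "hhat ((1 / real q) *\<^sub>R of_int_vec k)"] conjI
          tendsto_f_rational[OF q int[OF k_in]] hhat_close f_close)
  qed
qed

lemma tendsto_f_closure_open_convex_cone:
  assumes cone: "open_convex_cone S"
    and int: "\<forall>y\<in>S. (\<forall>i. y $ i \<in> \<int>) \<longrightarrow> (\<lambda>m. f m y) \<longlonglongrightarrow> hhat y"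
    and x: "x \<in> closure S"
  shows "(\<lambda>m. f m x) \<longlonglongrightarrow> hhat x"
proof (rule tendsto_f_closure_cone[OF _ _ _ x])
  show "open S" "\<And>y c. y \<in> S \<Longrightarrow> 0 < c \<Longrightarrow> c *\<^sub>R y \<in> S"
    using cone by (simp_all add: open_convex_cone_def)
  have "of_int_vec k $ i \<in> \<int>" for k i by (simp add: of_int_vec_def)
  then show "(\<lambda>m. f m (of_int_vec k)) \<longlonglongrightarrow> hhat (of_int_vec k)" if "of_int_vec k \<in> S" for k
    using int that by blast
qed

end

end

theorem propositionA5:
  fixes h :: "'p::ab_group_add \<Rightarrow> real" and s :: real
    and L :: "'n::finite \<Rightarrow> 'p" and hhat :: "real ^ 'n \<Rightarrow> real"
  assumes s_pos: "s > 0"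
    and growth: "\<And>r (Ls :: nat \<Rightarrow> 'p). \<exists>C R. \<forall>m.
          znorm1 r m \<ge> R \<longrightarrow> \<bar>h (zlincomb r m Ls)\<bar> \<le> C * znorm1 r m powr s"
    and diff: "\<And>r (Ls :: nat \<Rightarrow> 'p) L0. \<exists>C R. \<forall>m.
          znorm1 r m \<ge> R \<longrightarrow>
            \<bar>h (L0 + zlincomb r m Ls) - h (zlincomb r m Ls)\<bar> \<le> C * znorm1 r m powr (s - 1)"
    and hhat_int: "\<And>k :: 'n \<Rightarrow> int.
          ereal (hhat (\<chi> i. real_of_int (k i))) =
          limsup (\<lambda>m::nat. ereal (h (zsmult (int m) (\<Sum>i\<in>UNIV. zsmult (k i) (L i))) / real m powr s))"
    and hhat_hom: "\<And>t x. t \<ge> 0 \<Longrightarrow> hhat (t *\<^sub>R x) = t powr s * hhat x"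
    and hhat_cont: "continuous_on UNIV hhat"
  shows "(\<forall>x :: real ^ 'n. ereal (hhat x) =
            limsup (\<lambda>m::nat. ereal (h (\<Sum>i\<in>UNIV. zsmult \<lfloor>real m * x $ i\<rfloor> (L i)) / real m powr s)))
       \<and> (\<forall>\<sigma> :: (real ^ 'n) set. open_convex_cone \<sigma> \<longrightarrow>
            (\<forall>x\<in>\<sigma>. (\<forall>i. x $ i \<in> \<int>) \<longrightarrow>
               (\<lambda>m::nat. h (\<Sum>i\<in>UNIV. zsmult \<lfloor>real m * x $ i\<rfloor> (L i)) / real m powr s)
                 \<longlonglongrightarrow> hhat x) \<longrightarrow>
            (\<forall>x\<in>closure \<sigma>.
               (\<lambda>m::nat. h (\<Sum>i\<in>UNIV. zsmult \<lfloor>real m * x $ i\<rfloor> (L i)) / real m powr s)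
                 \<longlonglongrightarrow> hhat x))"
proof -
  interpret lattice_height h s L
  proof
    show "\<exists>C R. \<forall>a. R \<le> znorm a \<longrightarrow> \<bar>h (zcomb L a)\<bar> \<le> C * znorm a powr s"
      by (rule zcomb_bound_of_zlincomb_bound[where P = "\<lambda>C t v. \<bar>h v\<bar> \<le> C * t powr s", OF growth])
    show "\<exists>C R. \<forall>a. R \<le> znorm a \<longrightarrow> \<bar>h (p + zcomb L a) - h (zcomb L a)\<bar> \<le> C * znorm a powr (s - 1)" for p
      by (rule zcomb_bound_of_zlincomb_bound[where P = "\<lambda>C t v. \<bar>h (p + v) - h v\<bar> \<le> C * t powr (s - 1)",
            OF diff])
  qed (fact s_pos)
  have f_eq: "h (\<Sum>i\<in>UNIV. zsmult \<lfloor>real m * x $ i\<rfloor> (L i)) / real m powr s = f m x" for m x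
    by (simp add: f_def zcomb_def zfloor_def)
  have hhat_int': "limsup (\<lambda>m. ereal (f m (of_int_vec k))) = ereal (hhat (of_int_vec k))" for k
    using hhat_int[of k] unfolding f_of_int_vec unfolding of_int_vec_def zcomb_def by simp
  note hhat = hhat_int' hhat_hom hhat_cont
  show ?thesis
    unfolding f_eq
    by (auto simp: limsup_f[OF hhat] intro: tendsto_f_closure_open_convex_cone[OF hhat])
qed

end
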